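(* For every instance, every allocation selected by Generalized PAV satisfies EJR-1.
   Context: Model: There is a set of agents $N=\{1,\dots,n\}$. The resource $R$ consists of a cake $C=[0,c]$ for a real $c\ge 0$ and a set of indivisible goods $G=\{g_1,\dots,g_m\}$ for an integer $m\ge 0$, with $\max(c,m)>0$. A piece of cake is a union of finitely many disjoint closed subintervals of $C$; its length $\ell(\cdot)$ is the sum of the lengths of its intervals. A bundle $R'=(C',G')$ consists of a piece of cake $C'\subseteq C$ and a set $G'\subseteq G$; its size is $s(R')=\ell(C')+|G'|$. Each agent $i$ approves a bundle $R_i=(C_i,G_i)$, and her utility for a bundle $R'$ is $u_i(R')=\ell(C_i\cap C')+|G_i\cap G'|$. A parameter $\alpha\in(0,c+m]$ is given; an allocation is a bundle $A$ with $s(A)\le\alpha$. For a real $t>0$, $N^*\subseteq N$ is $t$-cohesive if $|N^*|\ge t n/\alpha$ and $s(\bigcap_{i\in N^*}R_i)\ge t$. EJR-1: an allocation $A$ satisfies EJR-1 if for every real $t>0$ and every $t$-cohesive group $N^*$, some $j\in N^*$ has $u_j(A)>t-1$. Generalized harmonic numbers: $H_x\coloneqq\sum_{k=1}^\infty\frac{x}{k(x+k)}$ for real $x\ge0$. Generalized PAV selects an allocation $R'$ with $s(R')\le\alpha$ maximizing $\sum_{i\in N}H_{u_i(R')}$. *)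

theory Defs
  imports "HOL-Analysis.Analysis"
begin

definition is_piece :: "real \<Rightarrow> real set \<Rightarrow> bool" where
  "is_piece c S \<longleftrightarrow> (\<exists>ivs :: (real \<times> real) list.
     (\<forall>p\<in>set ivs. 0 \<le> fst p \<and> fst p \<le> snd p \<and> snd p \<le> c) \<and>
     (\<forall>i<length ivs. \<forall>j<length ivs. i \<noteq> j \<longrightarrow>
        {fst (ivs!i)..snd (ivs!i)} \<inter> {fst (ivs!j)..snd (ivs!j)} = {}) \<and>
     S = (\<Union>p\<in>set ivs. {fst p..snd p}))"

definition len :: "real set \<Rightarrow> real" where
  "len S = measure lborel S"

definition is_bundle :: "real \<Rightarrow> 'g set \<Rightarrow> real set \<times> 'g set \<Rightarrow> bool" where
  "is_bundle c G B \<longleftrightarrow> is_piece c (fst B) \<and> snd B \<subseteq> G"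

definition bsize :: "real set \<times> 'g set \<Rightarrow> real" where
  "bsize B = len (fst B) + real (card (snd B))"

definition util :: "real set \<times> 'g set \<Rightarrow> real set \<times> 'g set \<Rightarrow> real" where
  "util Ri B = len (fst Ri \<inter> fst B) + real (card (snd Ri \<inter> snd B))"

definition is_allocation :: "real \<Rightarrow> 'g set \<Rightarrow> real \<Rightarrow> real set \<times> 'g set \<Rightarrow> bool" where
  "is_allocation c G \<alpha> A \<longleftrightarrow> is_bundle c G A \<and> bsize A \<le> \<alpha>"

definition genH :: "real \<Rightarrow> real" where
  "genH x = (\<Sum>k. x / (real (Suc k) * (x + real (Suc k))))"

definition gen_PAV :: "'a set \<Rightarrow> ('a \<Rightarrow> real set \<times> 'g set) \<Rightarrow> real \<Rightarrow> 'g set \<Rightarrow> real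
                       \<Rightarrow> real set \<times> 'g set \<Rightarrow> bool" where
  "gen_PAV N R c G \<alpha> A \<longleftrightarrow> is_allocation c G \<alpha> A \<and>
     (\<forall>B. is_allocation c G \<alpha> B \<longrightarrow>
        (\<Sum>i\<in>N. genH (util (R i) B)) \<le> (\<Sum>i\<in>N. genH (util (R i) A)))"

definition common_bundle :: "'a set \<Rightarrow> ('a \<Rightarrow> real set \<times> 'g set) \<Rightarrow> real set \<times> 'g set" where
  "common_bundle S R = ((\<Inter>i\<in>S. fst (R i)), (\<Inter>i\<in>S. snd (R i)))"

definition cohesive :: "'a set \<Rightarrow> ('a \<Rightarrow> real set \<times> 'g set) \<Rightarrow> real \<Rightarrow> real \<Rightarrow> 'a set \<Rightarrow> bool" where
  "cohesive N R \<alpha> t S \<longleftrightarrow> S \<subseteq> N \<and>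
     real (card S) \<ge> t * real (card N) / \<alpha> \<and> bsize (common_bundle S R) \<ge> t"

definition EJR1 :: "'a set \<Rightarrow> ('a \<Rightarrow> real set \<times> 'g set) \<Rightarrow> real \<Rightarrow> real set \<times> 'g set \<Rightarrow> bool" where
  "EJR1 N R \<alpha> A \<longleftrightarrow> (\<forall>t>0. \<forall>S. cohesive N R \<alpha> t S \<longrightarrow> (\<exists>j\<in>S. util (R j) A > t - 1))"

end

theory Submission
  imports Defs
begin

text \<open>
  Let \<open>A\<close> be a generalized-PAV allocation and suppose every member of a \<open>t\<close>-cohesive
  group \<open>S\<close> has utility at most \<open>t - 1\<close>. Then the commonly approved bundle has at least one
  unit of size outside \<open>A\<close>, so there is a bundle \<open>X\<close> of size 1, approved by all of \<open>S\<close> and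
  disjoint from \<open>A\<close> up to length zero. Split \<open>A\<close> into more than \<open>\<alpha> - 1\<close> parts of size at
  least \<open>r = s(A) + 1 - \<alpha>\<close> (its single goods and consecutive cake chunks of length \<open>r\<close>).
  Replacing any one part by \<open>X\<close> gives a feasible allocation, which by optimality does not
  increase \<open>\<Sum>i. H(u\<^sub>i)\<close>. Since \<open>H(x + 1) - H(x) = 1/(x + 1)\<close> and \<open>H\<close> is concave, an agent
  in \<open>S\<close> losing \<open>b\<close> gains at least \<open>(1 - b)/(u + 1)\<close> and any other agent loses at most
  \<open>b/u\<close>. Summed over all parts these bounds give \<open>|S| \<alpha> / t < n\<close>, contradicting cohesiveness.
\<close>

section \<open>Generalized harmonic numbers\<close>

lemma telescope_inverse_sums:
  fixes u :: real
  assumes "u > 0"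
  shows "(\<lambda>k. 1 / (u + real k) - 1 / (u + real (Suc k))) sums (1 / u)"
proof -
  have "(\<lambda>k. 1 / (u + real k)) \<longlonglongrightarrow> 0"
    by (intro tendsto_divide_0[OF tendsto_const] filterlim_at_top_imp_at_infinity
        filterlim_tendsto_add_at_top[OF tendsto_const] filterlim_real_sequentially)
  from telescope_sums'[OF this] show ?thesis by simp
qed

lemma summable_genH_terms:
  assumes "x \<ge> 0"
  shows "summable (\<lambda>k. x / (real (Suc k) * (x + real (Suc k))))"
proof (rule summable_comparison_test')
  have "summable (\<lambda>k. inverse (real (Suc k) ^ 2))"
    using inverse_power_summable[of 2, where 'a=real] by (subst summable_Suc_iff) simp
  then show "summable (\<lambda>k. x * inverse (real (Suc k) ^ 2))"
    by (rule summable_mult)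
  show "norm (x / (real (Suc k) * (x + real (Suc k)))) \<le> x * inverse (real (Suc k) ^ 2)" for k
    using assms by (simp add: divide_simps power2_eq_square mult_left_mono)
qed

lemma genH_diff_sums:
  assumes "a \<ge> 0" "b \<ge> 0"
  shows "(\<lambda>k. 1 / (a + real (Suc k)) - 1 / (b + real (Suc k))) sums (genH b - genH a)"
proof -
  have partial_fractions: "x / (real (Suc k) * (x + real (Suc k))) = 1 / real (Suc k) - 1 / (x + real (Suc k))"
    if "x \<ge> 0" for x k
    using that by (simp add: field_simps)
  have "(\<lambda>k. b / (real (Suc k) * (b + real (Suc k))) - a / (real (Suc k) * (a + real (Suc k))))
      sums (genH b - genH a)"
    unfolding genH_def using summable_genH_terms assms by (intro sums_diff summable_sums)
  then show ?thesis by (simp add: partial_fractions assms del: of_nat_Suc)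
qed

lemma genH_mono:
  assumes "0 \<le> a" "a \<le> b"
  shows "genH a \<le> genH b"
proof -
  have "0 \<le> 1 / (a + real (Suc k)) - 1 / (b + real (Suc k))" for k
    using assms by (simp add: frac_le)
  from sums_le[OF this sums_zero genH_diff_sums] show ?thesis using assms by simp
qed

lemma genH_gain:
  assumes "0 \<le> u" "0 \<le> b" "b \<le> 1"
  shows "(1 - b) / (u + 1) \<le> genH (u + 1 - b) - genH u"
proof -
  have tel: "(\<lambda>k. (1 - b) * (1 / ((u + 1) + real k) - 1 / ((u + 1) + real (Suc k)))) sums ((1 - b) * (1 / (u + 1)))"
    using telescope_inverse_sums[of "u + 1"] assms by (intro sums_mult) auto
  have "(1 - b) * (1 / ((u + 1) + real k) - 1 / ((u + 1) + real (Suc k)))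
      \<le> 1 / (u + real (Suc k)) - 1 / ((u + 1 - b) + real (Suc k))" for k
  proof -
    have "(1 - b) * (1 / ((u + 1) + real k) - 1 / ((u + 1) + real (Suc k)))
        = (1 - b) / ((u + real (Suc k)) * (u + 1 + real (Suc k)))"
      using assms by (simp add: field_simps)
    also have "\<dots> \<le> (1 - b) / ((u + real (Suc k)) * ((u + 1 - b) + real (Suc k)))"
      using assms by (intro divide_left_mono mult_left_mono mult_pos_pos) auto
    also have "\<dots> = 1 / (u + real (Suc k)) - 1 / ((u + 1 - b) + real (Suc k))"
      using assms by (simp add: field_simps)
    finally show ?thesis .
  qed
  from sums_le[OF this tel genH_diff_sums] show ?thesis using assms by simp
qed

lemma genH_loss:
  assumes "0 < u" "0 \<le> b" "b \<le> 1" "b \<le> u"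
  shows "genH u - genH (u - b) \<le> b / u"
proof -
  have tel: "(\<lambda>k. b * (1 / (u + real k) - 1 / (u + real (Suc k)))) sums (b * (1 / u))"
    using telescope_inverse_sums[of u] assms by (intro sums_mult) auto
  have "1 / ((u - b) + real (Suc k)) - 1 / (u + real (Suc k))
      \<le> b * (1 / (u + real k) - 1 / (u + real (Suc k)))" for k
  proof -
    have "1 / ((u - b) + real (Suc k)) - 1 / (u + real (Suc k))
        = b / (((u - b) + real (Suc k)) * (u + real (Suc k)))"
      using assms by (simp add: field_simps)
    also have "\<dots> \<le> b / ((u + real k) * (u + real (Suc k)))"
      using assms by (intro divide_left_mono mult_right_mono mult_pos_pos) auto
    also have "\<dots> = b * (1 / (u + real k) - 1 / (u + real (Suc k)))"
      using assms by (simp add: field_simps)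
    finally show ?thesis .
  qed
  from sums_le[OF this genH_diff_sums tel] show ?thesis using assms by simp
qed

lemma genH_increment:
  assumes "0 \<le> u" "0 \<le> b" "b \<le> 1" "u - b + 1 \<le> v"
  shows "(1 - b) / (u + 1) \<le> genH v - genH u"
  using genH_gain[OF assms(1-3)] genH_mono[of "u + 1 - b" v] assms by simp

lemma genH_decrement:
  assumes "0 \<le> u" "0 \<le> b" "b \<le> 1" "b \<le> u" "u - b \<le> v"
  shows "- (b / u) \<le> genH v - genH u"
proof (cases "u = 0")
  case True
  then show ?thesis
    using assms genH_mono[of u v] by simp
next
  case False
  then show ?thesis
    using genH_loss[of u b] genH_mono[of "u - b" v] assms by simp
qed

lemma sum_genH_change_ge:
  assumes N: "finite N" "S \<subseteq> N"
    and u: "\<And>i. i \<in> N \<Longrightarrow> 0 \<le> u i"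
    and b: "\<And>i. i \<in> N \<Longrightarrow> 0 \<le> b i \<and> b i \<le> 1 \<and> b i \<le> u i"
    and v: "\<And>i. i \<in> N \<Longrightarrow> u i - b i \<le> v i"
    and v_S: "\<And>i. i \<in> S \<Longrightarrow> u i - b i + 1 \<le> v i"
  shows "(\<Sum>i\<in>S. (1 - b i) / (u i + 1)) - (\<Sum>i\<in>N - S. b i / u i)
    \<le> (\<Sum>i\<in>N. genH (v i)) - (\<Sum>i\<in>N. genH (u i))"
proof -
  have "(\<Sum>i\<in>S. (1 - b i) / (u i + 1)) \<le> (\<Sum>i\<in>S. genH (v i) - genH (u i))"
    using N(2) u b v_S by (intro sum_mono genH_increment) auto
  moreover have "(\<Sum>i\<in>N - S. - (b i / u i)) \<le> (\<Sum>i\<in>N - S. genH (v i) - genH (u i))"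
    using u b v by (intro sum_mono genH_decrement) auto
  moreover have "(\<Sum>i\<in>N. genH (v i) - genH (u i))
      = (\<Sum>i\<in>N - S. genH (v i) - genH (u i)) + (\<Sum>i\<in>S. genH (v i) - genH (u i))"
    by (rule sum.subset_diff[OF N(2,1)])
  ultimately show ?thesis
    by (simp add: sum_subtractf sum_negf)
qed

lemma averaged_exchange_gain_ge:
  assumes N: "finite N" "S \<subseteq> N" and P: "finite P"
    and u: "\<And>i. i \<in> N \<Longrightarrow> 0 \<le> u i"
    and b: "\<And>i. i \<in> N \<Longrightarrow> (\<Sum>p\<in>P. b p i) \<le> u i"
    and unsatisfied: "\<And>i. i \<in> S \<Longrightarrow> u i \<le> t - 1"
  shows "real (card S) * ((real (card P) + 1) / t) - real (card N)
    \<le> (\<Sum>p\<in>P. (\<Sum>i\<in>S. (1 - b p i) / (u i + 1)) - (\<Sum>i\<in>N - S. b p i / u i))"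
proof -
  define B where "B i = (\<Sum>p\<in>P. b p i)" for i
  have "(\<Sum>p\<in>P. \<Sum>i\<in>S. (1 - b p i) / (u i + 1)) = (\<Sum>i\<in>S. (real (card P) - B i) / (u i + 1))"
    unfolding B_def by (subst sum.swap) (simp add: sum_divide_distrib[symmetric] sum_subtractf)
  moreover have "(\<Sum>p\<in>P. \<Sum>i\<in>N - S. b p i / u i) = (\<Sum>i\<in>N - S. B i / u i)"
    unfolding B_def by (subst sum.swap) (simp add: sum_divide_distrib[symmetric])
  ultimately have "(\<Sum>p\<in>P. (\<Sum>i\<in>S. (1 - b p i) / (u i + 1)) - (\<Sum>i\<in>N - S. b p i / u i))
      = (\<Sum>i\<in>S. (real (card P) - B i) / (u i + 1)) - (\<Sum>i\<in>N - S. B i / u i)"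
    by (simp add: sum_subtractf)
  moreover have "(\<Sum>i\<in>S. (real (card P) + 1) / t - 1) \<le> (\<Sum>i\<in>S. (real (card P) - B i) / (u i + 1))"
  proof (rule sum_mono)
    fix i assume i: "i \<in> S"
    then have "0 \<le> u i" "B i \<le> u i"
      using N(2) u b unfolding B_def by auto
    have "(real (card P) + 1) / t - 1 \<le> (real (card P) + 1) / (u i + 1) - 1"
      using unsatisfied[OF i] \<open>0 \<le> u i\<close> by (simp add: divide_left_mono)
    also have "\<dots> = (real (card P) - u i) / (u i + 1)"
      using \<open>0 \<le> u i\<close> by (simp add: field_simps)
    also have "\<dots> \<le> (real (card P) - B i) / (u i + 1)"
      using \<open>0 \<le> u i\<close> \<open>B i \<le> u i\<close> by (simp add: divide_right_mono)
    finally show "(real (card P) + 1) / t - 1 \<le> (real (card P) - B i) / (u i + 1)" .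
  qed
  moreover have "(\<Sum>i\<in>N - S. B i / u i) \<le> (\<Sum>i\<in>N - S. 1)"
  proof (rule sum_mono)
    fix i assume "i \<in> N - S"
    then have "0 \<le> u i" "B i \<le> u i"
      using u b unfolding B_def by auto
    then show "B i / u i \<le> 1"
      by (auto simp: divide_le_eq_1)
  qed
  moreover have "real (card (N - S)) = real (card N) - real (card S)"
    using N card_mono[OF N] by (simp add: card_Diff_subset finite_subset of_nat_diff)
  ultimately show ?thesis
    by (simp add: algebra_simps)
qed

section \<open>Pieces of cake\<close>

definition interval_union :: "real set \<Rightarrow> bool" where
  "interval_union S \<longleftrightarrow> (\<exists>F. finite F \<and> S = (\<Union>p\<in>F. {fst p..snd p}))"

lemma interval_union_empty: "interval_union {}"
  unfolding interval_union_def by (rule exI[of _ "{}"]) simp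

lemma interval_union_Icc: "interval_union {a..b}"
  unfolding interval_union_def by (rule exI[of _ "{(a, b)}"]) simp

lemma interval_union_Un:
  assumes "interval_union A" "interval_union B"
  shows "interval_union (A \<union> B)"
proof -
  obtain F1 F2 where "finite F1" "A = (\<Union>p\<in>F1. {fst p..snd p})" "finite F2" "B = (\<Union>p\<in>F2. {fst p..snd p})"
    using assms unfolding interval_union_def by blast
  then show ?thesis unfolding interval_union_def by (intro exI[of _ "F1 \<union> F2"]) auto
qed

lemma interval_union_Int:
  assumes "interval_union A" "interval_union B"
  shows "interval_union (A \<inter> B)"
proof -
  obtain F1 F2 where F: "finite F1" "A = (\<Union>p\<in>F1. {fst p..snd p})" "finite F2" "B = (\<Union>p\<in>F2. {fst p..snd p})"
    using assms unfolding interval_union_def by blast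
  define meet :: "(real \<times> real) \<times> (real \<times> real) \<Rightarrow> real \<times> real"
    where "meet = (\<lambda>(p, q). (max (fst p) (fst q), min (snd p) (snd q)))"
  have "A \<inter> B = (\<Union>pq\<in>F1 \<times> F2. {fst (meet pq)..snd (meet pq)})"
    unfolding F meet_def by auto
  then show ?thesis
    unfolding interval_union_def using F by (intro exI[of _ "meet ` (F1 \<times> F2)"]) auto
qed

lemma interval_union_INT:
  assumes "finite K" "\<And>i. i \<in> K \<Longrightarrow> interval_union (f i)" "interval_union S"
  shows "interval_union (S \<inter> (\<Inter>i\<in>K. f i))"
  using assms
proof (induction K rule: finite_induct)
  case (insert x K)
  have "interval_union (f x \<inter> (S \<inter> (\<Inter>i\<in>K. f i)))"
    by (rule interval_union_Int) (use insert in auto)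
  then show ?case by (simp add: Int_left_commute)
qed simp

lemma compact_interval_union: "interval_union S \<Longrightarrow> compact S"
  unfolding interval_union_def by (auto intro: compact_UN)

lemma Icc_Un_Icc_if_overlap:
  fixes a b c d :: real
  assumes "{a..b} \<inter> {c..d} \<noteq> {}"
  shows "{a..b} \<union> {c..d} = {min a c..max b d}"
  using assms by auto

lemma disjoint_interval_family:
  assumes "finite F"
  shows "\<exists>D. finite D \<and> (\<forall>p\<in>D. fst p \<le> snd p) \<and>
      (\<forall>p\<in>D. \<forall>q\<in>D. p \<noteq> q \<longrightarrow> {fst p..snd p} \<inter> {fst q..snd q} = {}) \<and>
      (\<Union>p\<in>F. {fst p..snd p :: real}) = (\<Union>p\<in>D. {fst p..snd p})"
  using assms
proof (induction "card F" arbitrary: F rule: less_induct)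
  case less
  define F' where "F' = {p\<in>F. fst p \<le> snd p}"
  have F': "finite F'" "card F' \<le> card F" "(\<Union>p\<in>F. {fst p..snd p}) = (\<Union>p\<in>F'. {fst p..snd p})"
    using less.prems by (auto simp: F'_def intro: card_mono)
  show ?case
  proof (cases "\<exists>p\<in>F'. \<exists>q\<in>F'. p \<noteq> q \<and> {fst p..snd p} \<inter> {fst q..snd q} \<noteq> {}")
    case False
    then show ?thesis using F' by (intro exI[of _ F']) (auto simp: F'_def)
  next
    case True
    then obtain p q where pq: "p \<in> F'" "q \<in> F'" "p \<noteq> q" "{fst p..snd p} \<inter> {fst q..snd q} \<noteq> {}"
      by blast
    define F'' where "F'' = insert (min (fst p) (fst q), max (snd p) (snd q)) (F' - {p, q})"
    have "card F'' \<le> Suc (card (F' - {p, q}))"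
      unfolding F''_def by (rule card_insert_le_m1) (use F' in auto)
    also have "card (F' - {p, q}) = card F' - 2"
      using F' pq by (subst card_Diff_subset) auto
    finally have "card F'' < card F"
      using F' pq card_mono[of F' "{p, q}"] by auto
    moreover have "(\<Union>p\<in>F''. {fst p..snd p}) = (\<Union>p\<in>F'. {fst p..snd p})"
      using Icc_Un_Icc_if_overlap[OF pq(4)] pq(1,2) unfolding F''_def by auto
    ultimately show ?thesis
      using less.hyps[of F''] F' unfolding F''_def by auto
  qed
qed

lemma is_piece_iff: "is_piece c S \<longleftrightarrow> interval_union S \<and> S \<subseteq> {0..c}"
proof
  assume "is_piece c S"
  then obtain ivs where "\<forall>p\<in>set ivs. 0 \<le> fst p \<and> fst p \<le> snd p \<and> snd p \<le> c"
      "S = (\<Union>p\<in>set ivs. {fst p..snd p})"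
    unfolding is_piece_def by blast
  then show "interval_union S \<and> S \<subseteq> {0..c}"
    unfolding interval_union_def by (intro conjI exI[of _ "set ivs"]) auto
next
  assume S: "interval_union S \<and> S \<subseteq> {0..c}"
  then obtain F where F: "finite F" "S = (\<Union>p\<in>F. {fst p..snd p})"
    unfolding interval_union_def by blast
  obtain D where D: "finite D" "\<forall>p\<in>D. fst p \<le> snd p"
      "\<forall>p\<in>D. \<forall>q\<in>D. p \<noteq> q \<longrightarrow> {fst p..snd p} \<inter> {fst q..snd q} = {}" "S = (\<Union>p\<in>D. {fst p..snd p})"
    using disjoint_interval_family[OF F(1)] unfolding F(2) by blast
  obtain ivs where ivs: "set ivs = D" "distinct ivs"
    using finite_distinct_list[OF D(1)] by blast
  have "\<forall>p\<in>set ivs. 0 \<le> fst p \<and> fst p \<le> snd p \<and> snd p \<le> c"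
  proof
    fix p assume p: "p \<in> set ivs"
    then have "fst p \<le> snd p" using D(2) ivs by auto
    moreover from this have "fst p \<in> S" "snd p \<in> S" using D(4) p ivs by auto
    ultimately show "0 \<le> fst p \<and> fst p \<le> snd p \<and> snd p \<le> c" using S by auto
  qed
  moreover have "\<forall>i<length ivs. \<forall>j<length ivs. i \<noteq> j \<longrightarrow>
      {fst (ivs!i)..snd (ivs!i)} \<inter> {fst (ivs!j)..snd (ivs!j)} = {}"
  proof (intro allI impI)
    fix i j assume "i < length ivs" "j < length ivs" "i \<noteq> j"
    then have "ivs ! i \<noteq> ivs ! j" "ivs ! i \<in> D" "ivs ! j \<in> D"
      using ivs by (auto simp: nth_eq_iff_index_eq)
    then show "{fst (ivs!i)..snd (ivs!i)} \<inter> {fst (ivs!j)..snd (ivs!j)} = {}"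
      using D(3) by blast
  qed
  ultimately show "is_piece c S"
    unfolding is_piece_def using D(4) ivs(1) by blast
qed

lemma compact_piece: "is_piece c S \<Longrightarrow> compact S"
  by (simp add: is_piece_iff compact_interval_union)

lemma piece_subset: "is_piece c S \<Longrightarrow> S \<subseteq> {0..c}"
  by (simp add: is_piece_iff)

lemma is_piece_empty: "is_piece c {}"
  by (simp add: is_piece_iff interval_union_empty)

lemma is_piece_Un: "is_piece c A \<Longrightarrow> is_piece c B \<Longrightarrow> is_piece c (A \<union> B)"
  by (simp add: is_piece_iff interval_union_Un)

lemma is_piece_Int_Icc: "is_piece c A \<Longrightarrow> is_piece c (A \<inter> {a..b})"
  by (auto simp: is_piece_iff intro: interval_union_Int interval_union_Icc)

lemma is_piece_Diff_open_interval:
  assumes "is_piece c A"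
  shows "is_piece c (A - {p<..<q})"
proof -
  have "A - {p<..<q} = A \<inter> ({0..p} \<union> {q..c})"
    using piece_subset[OF assms] by auto
  then show ?thesis
    using assms by (auto simp: is_piece_iff intro: interval_union_Int interval_union_Un interval_union_Icc)
qed

lemma is_piece_Diff_open_intervals:
  "is_piece c S \<Longrightarrow> is_piece c (S - (\<Union>p\<in>set ps. {fst p<..<snd p}))"
proof (induction ps)
  case (Cons p ps)
  then have "is_piece c ((S - (\<Union>p\<in>set ps. {fst p<..<snd p})) - {fst p<..<snd p})"
    by (intro is_piece_Diff_open_interval)
  then show ?case
    by (simp add: Diff_eq Int_ac)
qed simp

lemma finite_Diff_interiors_Int:
  "finite ((S - (\<Union>p\<in>set ps. {fst p<..<snd p})) \<inter> (\<Union>p\<in>set ps. {fst p..snd p :: real}))"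
proof (rule finite_subset[of _ "\<Union>p\<in>set ps. {fst p, snd p}"])
  show "(S - (\<Union>p\<in>set ps. {fst p<..<snd p})) \<inter> (\<Union>p\<in>set ps. {fst p..snd p})
      \<subseteq> (\<Union>p\<in>set ps. {fst p, snd p})"
  proof
    fix x assume "x \<in> (S - (\<Union>p\<in>set ps. {fst p<..<snd p})) \<inter> (\<Union>p\<in>set ps. {fst p..snd p})"
    then obtain p where "p \<in> set ps" "x \<in> {fst p..snd p}" "x \<notin> {fst p<..<snd p}"
      by blast
    then show "x \<in> (\<Union>p\<in>set ps. {fst p, snd p})"
      by force
  qed
qed simp

lemma is_piece_INT:
  assumes "finite K" "K \<noteq> {}" "\<And>i. i \<in> K \<Longrightarrow> is_piece c (f i)"
  shows "is_piece c (\<Inter>i\<in>K. f i)"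
proof -
  have eq: "(\<Inter>i\<in>K. f i) = {0..c} \<inter> (\<Inter>i\<in>K. f i)"
    using assms piece_subset by blast
  have "interval_union ({0..c} \<inter> (\<Inter>i\<in>K. f i))"
    using assms by (intro interval_union_INT interval_union_Icc) (auto simp: is_piece_iff)
  then show ?thesis
    unfolding is_piece_iff by (subst (1 2) eq) simp
qed

section \<open>Length\<close>

lemma len_nonneg: "0 \<le> len S"
  unfolding len_def by (rule measure_nonneg)

lemma len_mono: "compact A \<Longrightarrow> compact B \<Longrightarrow> A \<subseteq> B \<Longrightarrow> len A \<le> len B"
  unfolding len_def
  by (rule measure_mono_fmeasurable[OF _ fmeasurableD[OF fmeasurable_compact] fmeasurable_compact])

lemma len_Un: "compact A \<Longrightarrow> compact B \<Longrightarrow> len (A \<union> B) = len A + len B - len (A \<inter> B)"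
  unfolding len_def by (intro measure_Un3 fmeasurable_compact)

lemma len_Un_le: "compact A \<Longrightarrow> compact B \<Longrightarrow> len (A \<union> B) \<le> len A + len B"
  using len_Un len_nonneg[of "A \<inter> B"] by fastforce

lemma len_finite: "finite A \<Longrightarrow> len A = 0"
  unfolding len_def by (rule measure_eq_0_null_sets[OF finite_imp_null_set_lborel])

lemma len_Icc: "a \<le> b \<Longrightarrow> len {a..b} = b - a"
  unfolding len_def by (rule measure_lborel_Icc)

lemma len_Int_Icc_split:
  assumes "compact E" "a \<le> b" "b \<le> d"
  shows "len (E \<inter> {a..d}) = len (E \<inter> {a..b}) + len (E \<inter> {b..d})"
proof -
  have "E \<inter> {a..d} = (E \<inter> {a..b}) \<union> (E \<inter> {b..d})"
    using assms by auto
  moreover have "len ((E \<inter> {a..b}) \<inter> (E \<inter> {b..d})) = 0"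
    by (rule len_finite[OF finite_subset[of _ "{b}"]]) auto
  ultimately show ?thesis
    using len_Un[of "E \<inter> {a..b}" "E \<inter> {b..d}"] assms(1) by (simp add: compact_Int_closed)
qed

lemma len_Int_Icc_le:
  assumes "compact E" "a \<le> b"
  shows "len (E \<inter> {a..b}) \<le> b - a"
  using len_mono[of "E \<inter> {a..b}" "{a..b}"] len_Icc[OF assms(2)] assms(1) by (simp add: compact_Int_closed)

lemma len_Diff_open_interval:
  assumes "compact E"
  shows "len (E - {p<..<q}) = len E - len (E \<inter> {p..q})"
proof -
  have "E = (E - {p<..<q}) \<union> (E \<inter> {p..q})"
    by auto
  moreover have "len ((E - {p<..<q}) \<inter> (E \<inter> {p..q})) = 0"
    by (rule len_finite[OF finite_subset[of _ "{p, q}"]]) auto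
  ultimately show ?thesis
    using len_Un[of "E - {p<..<q}" "E \<inter> {p..q}"] assms
    by (simp add: compact_diff compact_Int_closed)
qed

lemma len_Int_Icc_intermediate:
  assumes E: "compact E" and "a \<le> b" and v: "0 \<le> v" "v \<le> len (E \<inter> {a..b})"
  shows "\<exists>x. a \<le> x \<and> x \<le> b \<and> len (E \<inter> {a..x}) = v"
proof -
  have "continuous_on {a..b} (\<lambda>x. len (E \<inter> {a..x}))"
  proof (rule lipschitz_on_continuous_on[of 1], rule lipschitz_onI)
    have step: "\<bar>len (E \<inter> {a..y}) - len (E \<inter> {a..x})\<bar> \<le> y - x" if "a \<le> x" "x \<le> y" for x y
      using len_Int_Icc_split[OF E that] len_Int_Icc_le[OF E that(2)] len_nonneg[of "E \<inter> {x..y}"]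
      by linarith
    show "dist (len (E \<inter> {a..x})) (len (E \<inter> {a..y})) \<le> 1 * dist x y"
      if "x \<in> {a..b}" "y \<in> {a..b}" for x y
      using that step[of x y] step[of y x] by (cases "x \<le> y") (auto simp: dist_real_def abs_minus_commute)
  qed simp
  moreover have "len (E \<inter> {a..a}) = 0"
    by (rule len_finite) simp
  ultimately show ?thesis
    using IVT'[of "\<lambda>x. len (E \<inter> {a..x})" a v b] assms by auto
qed

lemma sum_len_Int_Icc_chain:
  assumes E: "compact E" and mono: "\<And>k. k < m \<Longrightarrow> p k \<le> p (Suc k)"
  shows "(\<Sum>k<m. len (E \<inter> {p k..p (Suc k)})) = len (E \<inter> {p 0..p m})"
  using mono
proof (induction m)
  case 0
  show ?case by (simp add: len_finite)
next
  case (Suc m)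
  have "p 0 \<le> p m"
  proof (rule dec_induct[of 0 m "\<lambda>j. p 0 \<le> p j"])
    fix n assume "n < m" "p 0 \<le> p n"
    then show "p 0 \<le> p (Suc n)" using Suc.prems[of n] by simp
  qed simp_all
  then show ?case
    using Suc len_Int_Icc_split[OF E, of "p 0" "p m" "p (Suc m)"] by simp
qed

lemma len_equal_chunks:
  assumes E: "compact E" and r: "0 < r"
  shows "\<exists>m pt. len E - r < real m * r \<and>
    (\<forall>k<m. pt k \<le> pt (Suc k) \<and> len (E \<inter> {pt k..pt (Suc k)}) = r)"
proof -
  obtain B where B: "\<forall>x\<in>E. \<bar>x\<bar> \<le> B"
    using compact_imp_bounded[OF E] unfolding bounded_real by blast
  define a where "a = - max B 0"
  define F where "F x = len (E \<inter> {a..x})" for x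
  have "E \<inter> {a..-a} = E"
    using B unfolding a_def by force
  then have FL: "F (-a) = len E"
    unfolding F_def by simp
  define m where "m = nat \<lfloor>len E / r\<rfloor>"
  have "real m = of_int \<lfloor>len E / r\<rfloor>"
    unfolding m_def using r len_nonneg[of E] by simp
  then have "real m \<le> len E / r" "len E / r < real m + 1"
    by linarith+
  then have m: "real m * r \<le> len E" "len E - r < real m * r"
    using r by (simp_all add: field_simps)
  have cut: "\<exists>x. a \<le> x \<and> x \<le> -a \<and> F x = real k * r" if "k \<le> m" for k
  proof (rule len_Int_Icc_intermediate[OF E, of a "-a" "real k * r", folded F_def])
    have "real k * r \<le> real m * r"
      using that r by (simp add: mult_right_mono)
    then show "real k * r \<le> F (- a)"
      using m(1) FL by linarith
  qed (use r in \<open>auto simp: a_def\<close>)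
  define pt where "pt k = (SOME x. a \<le> x \<and> x \<le> -a \<and> F x = real k * r)" for k
  have pt: "a \<le> pt k \<and> F (pt k) = real k * r" if "k \<le> m" for k
    using someI_ex[OF cut[OF that]] unfolding pt_def by blast
  have F_split: "F y = F x + len (E \<inter> {x..y})" if "a \<le> x" "x \<le> y" for x y
    unfolding F_def by (rule len_Int_Icc_split[OF E that])
  have "pt k \<le> pt (Suc k) \<and> len (E \<inter> {pt k..pt (Suc k)}) = r" if "k < m" for k
  proof -
    have ptk: "a \<le> pt k" "F (pt k) = real k * r" and ptk': "a \<le> pt (Suc k)" "F (pt (Suc k)) = real k * r + r"
      using pt[of k] pt[of "Suc k"] that by (auto simp: algebra_simps)
    have "pt k \<le> pt (Suc k)"
    proof (rule ccontr)
      assume "\<not> pt k \<le> pt (Suc k)"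
      then have "F (pt (Suc k)) \<le> F (pt k)"
        using F_split[of "pt (Suc k)" "pt k"] ptk' len_nonneg by force
      then show False using ptk ptk' r by simp
    qed
    then show ?thesis
      using F_split[OF ptk(1)] ptk ptk' by auto
  qed
  then show ?thesis
    using m(2) by blast
qed

section \<open>Cutting parts out of bundles\<close>

lemma card_Diff_Int_real:
  assumes "finite A"
  shows "real (card (A - B)) = real (card A) - real (card (A \<inter> B))"
  using assms card_Diff_subset_Int[of A B] card_mono[of A "A \<inter> B"] by (simp add: of_nat_diff)

lemma sum_card_Int_singleton:
  "finite A \<Longrightarrow> (\<Sum>h\<in>A. real (card (B \<inter> {h}))) = real (card (B \<inter> A))"
  by (induction A rule: finite_induct) (auto simp: Int_insert_right card_insert_if)

text \<open>
  Exchanging that part for \<open>X\<close> removes only the open interval, so the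
  remaining cake stays a piece; the two endpoints have length zero.
\<close>

fun cut_out :: "real \<times> real \<times> 'g set \<Rightarrow> real set \<times> 'g set \<Rightarrow> real set \<times> 'g set" where
  "cut_out (p, q, Y) A = (fst A \<inter> {p..q}, snd A \<inter> Y)"

fun exchange :: "real \<times> real \<times> 'g set \<Rightarrow> real set \<times> 'g set \<Rightarrow> real set \<times> 'g set
    \<Rightarrow> real set \<times> 'g set" where
  "exchange (p, q, Y) X A = ((fst A - {p<..<q}) \<union> fst X, (snd A - Y) \<union> snd X)"

lemma compact_cut_out: "compact (fst A) \<Longrightarrow> compact (fst (cut_out \<rho> A))"
  by (cases \<rho>) (simp add: compact_Int_closed)

lemma finite_cut_out: "finite (snd A) \<Longrightarrow> finite (snd (cut_out \<rho> A))"
  by (cases \<rho>) simp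

lemma bundle_compact_finite:
  assumes "is_bundle c G B" "finite G"
  shows "compact (fst B)" "finite (snd B)"
  using assms compact_piece finite_subset unfolding is_bundle_def by blast+

lemma util_nonneg: "0 \<le> util R B"
  unfolding util_def using len_nonneg by simp

lemma util_le_bsize:
  assumes "compact (fst R)" "compact (fst B)" "finite (snd B)"
  shows "util R B \<le> bsize B"
proof -
  have "len (fst R \<inter> fst B) \<le> len (fst B)"
    using assms by (intro len_mono) auto
  moreover have "card (snd R \<inter> snd B) \<le> card (snd B)"
    using assms by (intro card_mono) auto
  ultimately show ?thesis
    unfolding util_def bsize_def by simp
qed

lemma util_eq_bsize: "fst B \<subseteq> fst R \<Longrightarrow> snd B \<subseteq> snd R \<Longrightarrow> util R B = bsize B"
  unfolding util_def bsize_def by (simp add: Int_absorb1)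

lemma util_cut_out_le:
  assumes "compact (fst R)" "compact (fst A)" "finite (snd A)"
  shows "util R (cut_out \<rho> A) \<le> util R A"
proof -
  obtain p q Y where \<rho>: "\<rho> = (p, q, Y)"
    by (cases \<rho>)
  have "len (fst R \<inter> (fst A \<inter> {p..q})) \<le> len (fst R \<inter> fst A)"
    using assms by (intro len_mono) (auto simp: compact_Int compact_Int_closed)
  moreover have "card (snd R \<inter> (snd A \<inter> Y)) \<le> card (snd R \<inter> snd A)"
    using assms by (intro card_mono) auto
  ultimately show ?thesis
    unfolding util_def \<rho> by simp
qed

lemma is_bundle_exchange:
  assumes "is_bundle c G A" "is_bundle c G X"
  shows "is_bundle c G (exchange \<rho> X A)"
  using assms by (cases \<rho>) (auto simp: is_bundle_def is_piece_Un is_piece_Diff_open_interval)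

lemma bsize_exchange_le:
  assumes "compact (fst A)" "finite (snd A)" "compact (fst X)" "finite (snd X)"
  shows "bsize (exchange \<rho> X A) \<le> bsize A - bsize (cut_out \<rho> A) + bsize X"
proof -
  obtain p q Y where \<rho>: "\<rho> = (p, q, Y)"
    by (cases \<rho>)
  have "len ((fst A - {p<..<q}) \<union> fst X) \<le> len (fst A) - len (fst A \<inter> {p..q}) + len (fst X)"
    using len_Un_le[of "fst A - {p<..<q}" "fst X"] len_Diff_open_interval[of "fst A" p q] assms
    by (simp add: compact_diff)
  moreover have "card ((snd A - Y) \<union> snd X) \<le> card (snd A - Y) + card (snd X)"
    by (rule card_Un_le)
  ultimately show ?thesis
    unfolding bsize_def \<rho> using card_Diff_Int_real[OF assms(2), of Y] by simp
qed

lemma util_exchange_ge: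
  assumes "compact (fst A)" "finite (snd A)" "compact (fst X)" "finite (snd X)" "compact (fst R)"
    and "len (fst X \<inter> fst A) = 0" "snd X \<inter> snd A = {}"
  shows "util R A - util R (cut_out \<rho> A) + util R X \<le> util R (exchange \<rho> X A)"
proof -
  obtain p q Y where \<rho>: "\<rho> = (p, q, Y)"
    by (cases \<rho>)
  define E where "E = fst R \<inter> fst A"
  have E: "compact E" "compact (fst R \<inter> fst X)"
    unfolding E_def using assms by (auto simp: compact_Int)
  have "len (E - {p<..<q}) = len E - len (E \<inter> {p..q})"
    by (rule len_Diff_open_interval[OF E(1)])
  moreover have "len ((E - {p<..<q}) \<inter> (fst R \<inter> fst X)) \<le> len (fst X \<inter> fst A)"
    using assms E by (intro len_mono) (auto simp: E_def compact_Int compact_diff)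
  moreover have "fst R \<inter> ((fst A - {p<..<q}) \<union> fst X) = (E - {p<..<q}) \<union> (fst R \<inter> fst X)"
    unfolding E_def by blast
  then have "len (fst R \<inter> ((fst A - {p<..<q}) \<union> fst X))
      = len (E - {p<..<q}) + len (fst R \<inter> fst X) - len ((E - {p<..<q}) \<inter> (fst R \<inter> fst X))"
    using len_Un[of "E - {p<..<q}" "fst R \<inter> fst X"] E by (simp add: compact_diff)
  moreover have "card (snd R \<inter> ((snd A - Y) \<union> snd X))
      = card (snd R \<inter> snd A - Y) + card (snd R \<inter> snd X)"
    using assms by (subst card_Un_disjoint[symmetric]) (auto intro: arg_cong[where f=card])
  moreover have "real (card (snd R \<inter> snd A - Y)) = real (card (snd R \<inter> snd A)) - real (card (snd R \<inter> (snd A \<inter> Y)))"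
    using card_Diff_Int_real[of "snd R \<inter> snd A" Y] assms by (simp add: Int_assoc)
  ultimately show ?thesis
    using assms len_nonneg[of "(E - {p<..<q}) \<inter> (fst R \<inter> fst X)"]
    unfolding util_def \<rho> E_def by (simp add: Int_assoc)
qed

text \<open>
  The parts are the single goods and consecutive cake chunks of length \<open>r\<close>; when
  \<open>r \<le> 0\<close>, sufficiently many empty parts do.
\<close>

lemma bundle_decomposition:
  fixes A :: "real set \<times> 'g set"
  assumes A: "compact (fst A)" "finite (snd A)" and r: "r \<le> 1"
  shows "\<exists>rs. bsize A - r < real (length rs) \<and>
    (\<forall>\<rho>\<in>set rs. r \<le> bsize (cut_out \<rho> A) \<and> bsize (cut_out \<rho> A) \<le> 1) \<and>
    (\<forall>R. compact (fst R) \<longrightarrow> (\<Sum>\<rho>\<leftarrow>rs. util R (cut_out \<rho> A)) \<le> util R A)"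
proof (cases "r \<le> 0")
  case True
  define rs where "rs = replicate (nat \<lceil>bsize A - r\<rceil> + 1) (0 :: real, 0 :: real, {} :: 'g set)"
  have "bsize A - r < real (length rs)"
    using real_nat_ceiling_ge[of "bsize A - r"] by (simp add: rs_def)
  moreover have "bsize (cut_out (0, 0, {}) A) = 0" "util R (cut_out (0, 0, {}) A) = 0" for R
    by (simp_all add: bsize_def util_def len_finite)
  ultimately show ?thesis
    using True by (intro exI[of _ rs]) (auto simp: rs_def sum_list_replicate util_nonneg)
next
  case False
  then have "0 < r" by simp
  then obtain m pt where m: "len (fst A) - r < real m * r"
    and chunks: "\<And>k. k < m \<Longrightarrow> pt k \<le> pt (Suc k) \<and> len (fst A \<inter> {pt k..pt (Suc k)}) = r"
    using len_equal_chunks[OF A(1)] by blast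
  obtain gs where gs: "set gs = snd A" "distinct gs"
    using finite_distinct_list[OF A(2)] by blast
  define rs where "rs = map (\<lambda>h. (0, 0, {h})) gs @ map (\<lambda>k. (pt k, pt (Suc k), {})) [0..<m]"
  have "real m * r \<le> real m"
    using r by (simp add: mult_left_le)
  then have "bsize A - r < real (length rs)"
    using m distinct_card[OF gs(2)] gs(1) by (simp add: rs_def bsize_def)
  moreover have "r \<le> bsize (cut_out \<rho> A) \<and> bsize (cut_out \<rho> A) \<le> 1" if "\<rho> \<in> set rs" for \<rho>
    using that r chunks gs(1) by (auto simp: rs_def bsize_def len_finite Int_absorb2)
  moreover have "(\<Sum>\<rho>\<leftarrow>rs. util R (cut_out \<rho> A)) \<le> util R A" if R: "compact (fst R)" for R
  proof -
    have "(\<Sum>\<rho>\<leftarrow>rs. util R (cut_out \<rho> A))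
        = (\<Sum>h\<in>snd A. real (card (snd R \<inter> {h}))) + (\<Sum>k<m. len ((fst R \<inter> fst A) \<inter> {pt k..pt (Suc k)}))"
    proof -
      have "util R (cut_out (0, 0, {h}) A) = real (card (snd R \<inter> {h}))" if "h \<in> snd A" for h
        using that by (simp add: util_def len_finite Int_absorb1)
      then have "(\<Sum>\<rho>\<leftarrow>map (\<lambda>h. (0, 0, {h})) gs. util R (cut_out \<rho> A))
          = (\<Sum>h\<in>snd A. real (card (snd R \<inter> {h})))"
        using gs by (simp add: sum_list_distinct_conv_sum_set comp_def)
      moreover have "(\<Sum>\<rho>\<leftarrow>map (\<lambda>k. (pt k, pt (Suc k), {})) [0..<m]. util R (cut_out \<rho> A))
          = (\<Sum>k<m. len ((fst R \<inter> fst A) \<inter> {pt k..pt (Suc k)}))"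
        by (simp add: util_def comp_def interv_sum_list_conv_sum_set_nat atLeast0LessThan Int_assoc)
      ultimately show ?thesis
        unfolding rs_def by simp
    qed
    also have "\<dots> = real (card (snd R \<inter> snd A)) + len ((fst R \<inter> fst A) \<inter> {pt 0..pt m})"
      using R A chunks by (simp add: sum_card_Int_singleton sum_len_Int_Icc_chain compact_Int)
    also have "\<dots> \<le> util R A"
      using len_mono[of "fst R \<inter> fst A \<inter> {pt 0..pt m}" "fst R \<inter> fst A"] R A
      by (auto simp: util_def compact_Int compact_Int_closed)
    finally show ?thesis .
  qed
  ultimately show ?thesis
    by blast
qed

section \<open>Generalized PAV and EJR-1\<close>

definition unit_outside :: "real \<Rightarrow> 'g set \<Rightarrow> real set \<times> 'g set \<Rightarrow> real set \<times> 'g set \<Rightarrow> bool" where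
  "unit_outside c G A X \<longleftrightarrow>
    is_bundle c G X \<and> bsize X = 1 \<and> len (fst X \<inter> fst A) = 0 \<and> snd X \<inter> snd A = {}"

lemma unit_outside_exists:
  fixes A D :: "real set \<times> 'g set"
  assumes D: "is_bundle c G D" and A: "is_bundle c G A" and G: "finite G"
    and excess: "1 \<le> bsize D - util D A"
  shows "\<exists>X. unit_outside c G A X \<and> fst X \<subseteq> fst D \<and> snd X \<subseteq> snd D"
proof (cases "snd D \<subseteq> snd A")
  case False
  then obtain d where "d \<in> snd D" "d \<notin> snd A"
    by blast
  with D show ?thesis
    by (intro exI[of _ "({}, {d})"]) (auto simp: unit_outside_def is_bundle_def is_piece_empty bsize_def len_finite)
next
  case True
  obtain ivs where ivs: "fst A = (\<Union>p\<in>set ivs. {fst p..snd p})"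
    using A unfolding is_bundle_def is_piece_def by blast
  \<comment> \<open>removing the interiors of the intervals of \<open>A\<close> leaves a piece meeting \<open>A\<close> only in endpoints\<close>
  define Z where "Z = fst D - (\<Union>p\<in>set ivs. {fst p<..<snd p})"
  have Z: "is_piece c Z" "compact Z"
    using D is_piece_Diff_open_intervals compact_piece unfolding Z_def is_bundle_def by blast+
  have ZA: "finite (Z \<inter> fst A)"
    unfolding Z_def ivs by (rule finite_Diff_interiors_Int)
  have "compact (fst D)" "compact (fst A)"
    using A D compact_piece unfolding is_bundle_def by blast+
  then have "len (fst D) \<le> len Z + len (fst D \<inter> fst A)"
    using len_mono[of "fst D" "Z \<union> (fst D \<inter> fst A)"] len_Un_le[of Z "fst D \<inter> fst A"] Z
    by (force simp: Z_def ivs compact_Int)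
  moreover have "snd D \<inter> snd A = snd D"
    using True by blast
  ultimately have "1 \<le> len (Z \<inter> {0..c})"
    using excess piece_subset[OF Z(1)] by (simp add: util_def bsize_def Int_absorb2 Int_commute)
  moreover from this have "0 \<le> c"
    by (cases "0 \<le> c") (auto simp: len_finite)
  ultimately obtain x where x: "0 \<le> x" "len (Z \<inter> {0..x}) = 1"
    using len_Int_Icc_intermediate[OF Z(2), of 0 c 1] by auto
  have "finite (Z \<inter> {0..x} \<inter> fst A)"
    using ZA by (rule finite_subset[rotated]) auto
  then show ?thesis
    using x Z(1) D G
    by (intro exI[of _ "(Z \<inter> {0..x}, {})"])
      (auto simp: unit_outside_def is_bundle_def bsize_def len_finite is_piece_Int_Icc Z_def)
qed

lemma is_bundle_common_bundle:
  assumes "finite S" "S \<noteq> {}" "\<forall>i\<in>S. is_bundle c G (R i)"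
  shows "is_bundle c G (common_bundle S R)"
  using assms by (auto simp: is_bundle_def common_bundle_def intro: is_piece_INT)

lemma unsatisfied_group_unit:
  assumes S: "finite S" "S \<noteq> {}" "\<forall>i\<in>S. is_bundle c G (R i)" and G: "finite G"
    and A: "is_bundle c G A" and t: "t \<le> bsize (common_bundle S R)" "\<forall>j\<in>S. util (R j) A \<le> t - 1"
  shows "\<exists>X. unit_outside c G A X \<and> (\<forall>j\<in>S. fst X \<subseteq> fst (R j) \<and> snd X \<subseteq> snd (R j))"
proof -
  define D where "D = common_bundle S R"
  have D: "is_bundle c G D" "\<forall>j\<in>S. fst D \<subseteq> fst (R j) \<and> snd D \<subseteq> snd (R j)"
    using is_bundle_common_bundle[OF S] unfolding D_def common_bundle_def by auto
  obtain j where j: "j \<in> S"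
    using S(2) by blast
  have "len (fst D \<inter> fst A) \<le> len (fst (R j) \<inter> fst A)"
    using D j S(3) A G by (intro len_mono) (auto simp: compact_Int bundle_compact_finite)
  moreover have "card (snd D \<inter> snd A) \<le> card (snd (R j) \<inter> snd A)"
    using D j S(3) A G by (intro card_mono) (auto simp: bundle_compact_finite)
  ultimately have "util D A \<le> util (R j) A"
    unfolding util_def by simp
  then have "1 \<le> bsize D - util D A"
    using t j unfolding D_def by fastforce
  then obtain X where "unit_outside c G A X" "fst X \<subseteq> fst D" "snd X \<subseteq> snd D"
    using unit_outside_exists[OF D(1) A G] by blast
  with D(2) show ?thesis
    by blast
qed

lemma gen_PAV_exchange_le:
  assumes PAV: "gen_PAV N R c G \<alpha> A" and N: "finite N" "S \<subseteq> N" "\<forall>i\<in>N. is_bundle c G (R i)"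
    and G: "finite G"
    and X: "unit_outside c G A X" "\<forall>j\<in>S. fst X \<subseteq> fst (R j) \<and> snd X \<subseteq> snd (R j)"
    and cut: "bsize A + 1 - \<alpha> \<le> bsize (cut_out \<rho> A)" "bsize (cut_out \<rho> A) \<le> 1"
  shows "(\<Sum>i\<in>S. (1 - util (R i) (cut_out \<rho> A)) / (util (R i) A + 1))
    - (\<Sum>i\<in>N - S. util (R i) (cut_out \<rho> A) / util (R i) A) \<le> 0"
proof -
  have A: "is_bundle c G A" "compact (fst A)" "finite (snd A)"
    using PAV G bundle_compact_finite unfolding gen_PAV_def is_allocation_def by blast+
  have unit: "is_bundle c G X" "bsize X = 1" "len (fst X \<inter> fst A) = 0" "snd X \<inter> snd A = {}"
    using X(1) unfolding unit_outside_def by blast+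
  have XC: "compact (fst X)" "finite (snd X)"
    using unit(1) G by (rule bundle_compact_finite)+
  define u where "u i = util (R i) A" for i
  define b where "b i = util (R i) (cut_out \<rho> A)" for i
  define v where "v i = util (R i) (exchange \<rho> X A)" for i
  have R: "compact (fst (R i))" if "i \<in> N" for i
    using N(3) that G bundle_compact_finite by blast
  have "bsize (exchange \<rho> X A) \<le> \<alpha>"
    using bsize_exchange_le[OF A(2,3) XC, of \<rho>] unit(2) cut(1) by linarith
  then have "is_allocation c G \<alpha> (exchange \<rho> X A)"
    using is_bundle_exchange[OF A(1) unit(1)] unfolding is_allocation_def by simp
  then have "(\<Sum>i\<in>N. genH (v i)) \<le> (\<Sum>i\<in>N. genH (u i))"
    using PAV unfolding gen_PAV_def u_def v_def by blast
  moreover have "(\<Sum>i\<in>S. (1 - b i) / (u i + 1)) - (\<Sum>i\<in>N - S. b i / u i)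
      \<le> (\<Sum>i\<in>N. genH (v i)) - (\<Sum>i\<in>N. genH (u i))"
  proof (rule sum_genH_change_ge[OF N(1,2)])
    fix i
    show "0 \<le> u i"
      unfolding u_def by (rule util_nonneg)
    assume i: "i \<in> N"
    have "b i \<le> bsize (cut_out \<rho> A)"
      unfolding b_def by (rule util_le_bsize[OF R[OF i] compact_cut_out[OF A(2)] finite_cut_out[OF A(3)]])
    moreover have "b i \<le> u i"
      unfolding b_def u_def by (rule util_cut_out_le[OF R[OF i] A(2,3)])
    ultimately show "0 \<le> b i \<and> b i \<le> 1 \<and> b i \<le> u i"
      using cut(2) util_nonneg unfolding b_def by fastforce
    have "u i - b i + util (R i) X \<le> v i"
      using util_exchange_ge[OF A(2,3) XC R[OF i] unit(3,4)] unfolding u_def b_def v_def .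
    then show "u i - b i \<le> v i"
      using util_nonneg[of "R i" X] by linarith
  next
    fix i assume i: "i \<in> S"
    then have "util (R i) X = 1"
      using unit(2) X(2) util_eq_bsize[of X "R i"] by simp
    then show "u i - b i + 1 \<le> v i"
      using util_exchange_ge[OF A(2,3) XC R unit(3,4), of i \<rho>] i N(2) unfolding u_def b_def v_def by auto
  qed
  ultimately show ?thesis
    unfolding u_def b_def by linarith
qed

lemma gen_PAV_unit_blocked:
  assumes PAV: "gen_PAV N R c G \<alpha> A" and N: "finite N" "S \<subseteq> N" "S \<noteq> {}" "\<forall>i\<in>N. is_bundle c G (R i)"
    and G: "finite G" and t: "0 < t" "\<forall>j\<in>S. util (R j) A \<le> t - 1"
    and X: "unit_outside c G A X" "\<forall>j\<in>S. fst X \<subseteq> fst (R j) \<and> snd X \<subseteq> snd (R j)"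
  shows "real (card S) * \<alpha> < t * real (card N)"
proof -
  have A: "compact (fst A)" "finite (snd A)" "bsize A \<le> \<alpha>"
    using PAV G bundle_compact_finite unfolding gen_PAV_def is_allocation_def by blast+
  obtain rs where rs: "\<alpha> - 1 < real (length rs)"
      "\<forall>\<rho>\<in>set rs. bsize A + 1 - \<alpha> \<le> bsize (cut_out \<rho> A) \<and> bsize (cut_out \<rho> A) \<le> 1"
      "\<forall>R. compact (fst R) \<longrightarrow> (\<Sum>\<rho>\<leftarrow>rs. util R (cut_out \<rho> A)) \<le> util R A"
    using bundle_decomposition[OF A(1,2), of "bsize A + 1 - \<alpha>"] A(3) by auto
  define b where "b k i = util (R i) (cut_out (rs ! k) A)" for k i
  have "(\<Sum>k<length rs. (\<Sum>i\<in>S. (1 - b k i) / (util (R i) A + 1))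
      - (\<Sum>i\<in>N - S. b k i / util (R i) A)) \<le> 0"
    unfolding b_def using rs(2) by (intro sum_nonpos gen_PAV_exchange_le[OF PAV N(1,2,4) G X]) auto
  moreover have "real (card S) * ((real (card {..<length rs}) + 1) / t) - real (card N)
      \<le> (\<Sum>k<length rs. (\<Sum>i\<in>S. (1 - b k i) / (util (R i) A + 1))
      - (\<Sum>i\<in>N - S. b k i / util (R i) A))"
  proof (rule averaged_exchange_gain_ge[OF N(1,2) finite_lessThan])
    fix i assume "i \<in> N"
    then have "compact (fst (R i))"
      using N(4) G bundle_compact_finite by blast
    then have "(\<Sum>\<rho>\<leftarrow>rs. util (R i) (cut_out \<rho> A)) \<le> util (R i) A"
      using rs(3) by blast
    then show "(\<Sum>k<length rs. b k i) \<le> util (R i) A"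
      unfolding b_def by (simp add: sum_list_sum_nth atLeast0LessThan)
  qed (use t in \<open>auto simp: util_nonneg\<close>)
  ultimately have "real (card S) * ((real (length rs) + 1) / t) \<le> real (card N)"
    by simp
  then have "real (card S) * (real (length rs) + 1) \<le> t * real (card N)"
    using t by (simp add: field_simps)
  moreover have "real (card S) * \<alpha> < real (card S) * (real (length rs) + 1)"
    using rs(1) N card_gt_0_iff[of S] finite_subset[OF N(2,1)] by simp
  ultimately show ?thesis
    by linarith
qed

theorem mainTheorem11:
  fixes N :: "'a set" and R :: "'a \<Rightarrow> real set \<times> 'g set"
    and c :: real and G :: "'g set" and \<alpha> :: real and A :: "real set \<times> 'g set"
  assumes "finite N" and "N \<noteq> {}"
    and "c \<ge> 0" and "finite G" and "max c (real (card G)) > 0"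
    and "\<alpha> > 0" and "\<alpha> \<le> c + real (card G)"
    and "\<forall>i\<in>N. is_bundle c G (R i)"
    and "gen_PAV N R c G \<alpha> A"
  shows "EJR1 N R \<alpha> A"
  unfolding EJR1_def
proof (intro allI impI)
  fix t S
  assume t: "0 < t" and "cohesive N R \<alpha> t S"
  then have S: "S \<subseteq> N" "t * real (card N) / \<alpha> \<le> real (card S)" "t \<le> bsize (common_bundle S R)"
    unfolding cohesive_def by auto
  have "0 < t * real (card N) / \<alpha>"
    using t assms(1,2,6) by (simp add: card_gt_0_iff)
  then have "S \<noteq> {}"
    using S(2) by auto
  show "\<exists>j\<in>S. t - 1 < util (R j) A"
  proof (rule ccontr)
    assume "\<not> (\<exists>j\<in>S. t - 1 < util (R j) A)"
    then have unsatisfied: "\<forall>j\<in>S. util (R j) A \<le> t - 1"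
      by auto
    have "is_bundle c G A"
      using assms(9) unfolding gen_PAV_def is_allocation_def by blast
    then obtain X where "unit_outside c G A X" "\<forall>j\<in>S. fst X \<subseteq> fst (R j) \<and> snd X \<subseteq> snd (R j)"
      using unsatisfied_group_unit[OF finite_subset[OF S(1) assms(1)] \<open>S \<noteq> {}\<close> _ assms(4) _ S(3) unsatisfied]
        assms(8) S(1) by blast
    then have "real (card S) * \<alpha> < t * real (card N)"
      using gen_PAV_unit_blocked[OF assms(9,1) S(1) \<open>S \<noteq> {}\<close> assms(8,4) t unsatisfied] by blast
    then show False
      using S(2) assms(6) by (simp add: field_simps)
  qed
qed

end
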